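(* Let $G=(V,E)$ be a finite simple undirected graph, let $A\subseteq V$ be a set of attacked devices, and let $k$ be a nonnegative integer, so that $(G,A,k)$ is an instance of SNP-V. Let $D\subseteq V\setminus A$ be the set of non-attacked devices of degree one in $G$ (i.e. devices not in $A$ with exactly one incident edge in $G$). Then there exists a solution $C$ of the SNP-V instance $(G,A,k)$, i.e. a set $C\subseteq V$ with $|C|\le k$ minimizing $\Phi(G-C)$ among all subsets of $V$ of size at most $k$, such that $C\cap D=\emptyset$.
   Context: Vertices of $G$ are called devices and edges connections. For $C\subseteq V$, $G-C$ denotes the graph obtained from $G$ by deleting every device in $C$ together with its incident connections. Two distinct devices $u,v$ of a graph $H$ are connected if there is a path from $u$ to $v$ in $H$. For a graph $H$ whose device set is a subset of $V$: an (unordered) pair $\{u,v\}$ of distinct devices of $H$ forms a vulnerable connection if $u$ and $v$ are connected in $H$ and $u\in A$ or $v\in A$; the $A$-vulnerability $\mathrm{vul}(H)$ is the number of such pairs. A pair $\{u,v\}$ of distinct devices of $H$ forms a healthy connection if $u$ and $v$ are connected in $H$ and $u\notin A$ and $v\notin A$; the $A$-healthiness $\mathrm{heal}(H)$ is the number of such pairs. The objective value of $H$ is $\Phi(H)=(|V|^2+1)\cdot\mathrm{vul}(H)-\mathrm{heal}(H)$, where $|V|$ is the number of devices of the original graph $G$. The Security Node Problem with Vulnerable Vertices (SNP-V) on input $(G,A,k)$ asks for a set $C\subseteq V$ with $|C|\le k$ such that $\Phi(G-C)$ is minimal; such a $C$ is called a solution. *)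

theory Defs
  imports Main
begin

definition simple_graph :: "'a set \<Rightarrow> 'a set set \<Rightarrow> bool" where
  "simple_graph V E \<longleftrightarrow> finite V \<and> (\<forall>e\<in>E. e \<subseteq> V \<and> card e = 2)"

definition del_verts :: "'a set \<Rightarrow> 'a set set \<Rightarrow> 'a set \<Rightarrow> 'a set \<times> 'a set set" where
  "del_verts V E C = (V - C, {e \<in> E. e \<inter> C = {}})"

definition adj :: "'a set \<Rightarrow> 'a set set \<Rightarrow> ('a \<times> 'a) set" where
  "adj W F = {(u, v). u \<in> W \<and> v \<in> W \<and> {u, v} \<in> F}"

definition connected_in :: "'a set \<Rightarrow> 'a set set \<Rightarrow> 'a \<Rightarrow> 'a \<Rightarrow> bool" where
  "connected_in W F u v \<longleftrightarrow> (u, v) \<in> (adj W F)\<^sup>+"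

definition conn_pairs :: "'a set \<Rightarrow> 'a set set \<Rightarrow> 'a set set" where
  "conn_pairs W F = {{u, v} | u v. u \<in> W \<and> v \<in> W \<and> u \<noteq> v \<and> connected_in W F u v}"

definition vul :: "'a set \<Rightarrow> 'a set \<Rightarrow> 'a set set \<Rightarrow> nat" where
  "vul A W F = card {p \<in> conn_pairs W F. p \<inter> A \<noteq> {}}"

definition heal :: "'a set \<Rightarrow> 'a set \<Rightarrow> 'a set set \<Rightarrow> nat" where
  "heal A W F = card {p \<in> conn_pairs W F. p \<inter> A = {}}"

(* objective value; n = |V| of the original graph *)
definition Phi :: "nat \<Rightarrow> 'a set \<Rightarrow> 'a set \<Rightarrow> 'a set set \<Rightarrow> int" where
  "Phi n A W F = (int n ^ 2 + 1) * int (vul A W F) - int (heal A W F)"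

definition snpv_solution :: "'a set \<Rightarrow> 'a set set \<Rightarrow> 'a set \<Rightarrow> nat \<Rightarrow> 'a set \<Rightarrow> bool" where
  "snpv_solution V E A k C \<longleftrightarrow>
     C \<subseteq> V \<and> card C \<le> k \<and>
     (\<forall>C'. C' \<subseteq> V \<and> card C' \<le> k \<longrightarrow>
        Phi (card V) A (fst (del_verts V E C)) (snd (del_verts V E C))
        \<le> Phi (card V) A (fst (del_verts V E C')) (snd (del_verts V E C')))"

definition degree :: "'a set set \<Rightarrow> 'a \<Rightarrow> nat" where
  "degree E v = card {e \<in> E. v \<in> e}"

end

theory Submission
  imports Defs
begin

text \<open>Take a solution \<open>C\<close> deleting as few devices of \<open>D\<close> as possible and suppose it deletes
  a leaf \<open>v \<in> D\<close> with neighbour \<open>u\<close>. If the component of \<open>u\<close> in \<open>G - C\<close> contains an attacked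
  device, delete \<open>u\<close> instead of \<open>v\<close>: no connection is gained, and either a vulnerable connection
  through \<open>u\<close> is lost, which outweighs every healthy one because of the weight \<open>|V|\<^sup>2 + 1\<close>, or
  \<open>u\<close> was isolated and nothing changes. Otherwise simply keep \<open>v\<close>: it only gains healthy
  connections. In both cases \<open>u \<notin> D\<close>, since \<open>u\<close> is attacked or has a second neighbour, so the
  new solution deletes fewer devices of \<open>D\<close>.\<close>

lemma adj_mono: "W \<subseteq> W' \<Longrightarrow> adj W E \<subseteq> adj W' E"
  unfolding adj_def by auto

lemma adj_sym: "sym (adj W E)"
  unfolding adj_def sym_def by (auto simp: insert_commute)

lemma adj_del_verts: "adj (V - C) {e \<in> E. e \<inter> C = {}} = adj (V - C) E"
  unfolding adj_def by auto

lemma Phi_del_verts: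
  "Phi n A (fst (del_verts V E C)) (snd (del_verts V E C)) = Phi n A (V - C) E"
  unfolding del_verts_def Phi_def vul_def heal_def conn_pairs_def connected_in_def
  by (simp add: adj_del_verts)

lemma snpv_solution_iff:
  "snpv_solution V E A k C \<longleftrightarrow> C \<subseteq> V \<and> card C \<le> k \<and>
     (\<forall>C'. C' \<subseteq> V \<and> card C' \<le> k \<longrightarrow> Phi (card V) A (V - C) E \<le> Phi (card V) A (V - C') E)"
  unfolding snpv_solution_def Phi_del_verts ..

lemma trancl_adj_in: "(x, y) \<in> (adj W E)\<^sup>+ \<Longrightarrow> x \<in> W \<and> y \<in> W"
  by (induct rule: trancl_induct) (auto simp: adj_def)

lemma connected_in_sym: "connected_in W E x y \<Longrightarrow> connected_in W E y x"
  unfolding connected_in_def by (meson adj_sym sym_trancl symD)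

lemma conn_pairs_iff:
  "{x, y} \<in> conn_pairs W E \<longleftrightarrow> x \<noteq> y \<and> connected_in W E x y"
proof
  assume "{x, y} \<in> conn_pairs W E"
  then obtain x' y' where "{x, y} = {x', y'}" "x' \<noteq> y'" "connected_in W E x' y'"
    unfolding conn_pairs_def by blast
  then show "x \<noteq> y \<and> connected_in W E x y"
    unfolding doubleton_eq_iff by (auto intro: connected_in_sym)
next
  assume "x \<noteq> y \<and> connected_in W E x y"
  then show "{x, y} \<in> conn_pairs W E"
    using trancl_adj_in[of x y W E] unfolding conn_pairs_def connected_in_def by auto
qed

lemma conn_pairsE:
  assumes "p \<in> conn_pairs W E"
  obtains x y where "p = {x, y}" "x \<noteq> y" "x \<in> W" "y \<in> W" "connected_in W E x y"
  using assms unfolding conn_pairs_def by blast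

lemma conn_pairs_subset: "p \<in> conn_pairs W E \<Longrightarrow> p \<subseteq> W"
  by (erule conn_pairsE) simp

lemma connected_in_mono: "W \<subseteq> W' \<Longrightarrow> connected_in W E x y \<Longrightarrow> connected_in W' E x y"
  unfolding connected_in_def by (meson adj_mono subsetD trancl_mono)

lemma conn_pairs_mono: "W \<subseteq> W' \<Longrightarrow> conn_pairs W E \<subseteq> conn_pairs W' E"
  by (auto elim!: conn_pairsE simp: conn_pairs_iff dest: connected_in_mono)

lemma conn_pairs_subset_image: "conn_pairs W E \<subseteq> (\<lambda>(x, y). {x, y}) ` (W \<times> W)"
proof
  fix p assume "p \<in> conn_pairs W E"
  then obtain x y where "p = {x, y}" "x \<in> W" "y \<in> W" by (rule conn_pairsE)
  then show "p \<in> (\<lambda>(x, y). {x, y}) ` (W \<times> W)" by (intro image_eqI[of _ _ "(x, y)"]) auto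
qed

lemma finite_conn_pairs: "finite W \<Longrightarrow> finite (conn_pairs W E)"
  by (rule finite_subset[OF conn_pairs_subset_image]) simp

lemma card_conn_pairs_le: "finite W \<Longrightarrow> card (conn_pairs W E) \<le> card W ^ 2"
proof -
  assume fin: "finite W"
  have "card (conn_pairs W E) \<le> card ((\<lambda>(x, y). {x, y}) ` (W \<times> W))"
    by (rule card_mono[OF _ conn_pairs_subset_image]) (simp add: fin)
  also have "\<dots> \<le> card (W \<times> W)" by (rule card_image_le) (simp add: fin)
  finally show ?thesis by (simp add: card_cartesian_product power2_eq_square)
qed

lemma heal_le: "finite W \<Longrightarrow> heal A W E \<le> card W ^ 2"
proof -
  assume fin: "finite W"
  have "heal A W E \<le> card (conn_pairs W E)"
    unfolding heal_def by (rule card_mono) (auto simp: fin finite_conn_pairs)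
  with card_conn_pairs_le[OF fin, of E] show ?thesis by linarith
qed

lemma Phi_less_of_vul_less:
  assumes "finite V" "W \<subseteq> V" "vul A W' E < vul A W E"
  shows "Phi (card V) A W' E < Phi (card V) A W E"
proof -
  have "heal A W E \<le> card W ^ 2" using heal_le assms(1,2) finite_subset by blast
  also have "\<dots> \<le> card V ^ 2" using assms(1,2) by (simp add: card_mono power_mono)
  finally have "int (heal A W E) < int (card V) ^ 2 + 1" by (simp flip: of_nat_power)
  moreover have "(int (card V) ^ 2 + 1) * (int (vul A W' E) + 1)
      \<le> (int (card V) ^ 2 + 1) * int (vul A W E)"
    using assms(3) by (intro mult_left_mono) auto
  moreover have "int (heal A W' E) \<ge> 0" by simp
  ultimately show ?thesis unfolding Phi_def distrib_left mult_1_right by linarith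
qed

text \<open>Collapsing a vertex \<open>v\<close> onto its only neighbour \<open>u\<close> turns paths into walks.\<close>
lemma adj_trancl_insert_collapse:
  assumes nbr: "\<And>w. w \<in> insert v W \<Longrightarrow> {v, w} \<in> E \<Longrightarrow> w = u"
    and "(x, y) \<in> (adj (insert v W) E)\<^sup>+"
  defines "c \<equiv> \<lambda>z. if z = v then u else z"
  shows "(c x, c y) \<in> (adj W E)\<^sup>*"
proof -
  have edge: "(c a, c b) \<in> (adj W E)\<^sup>*" if "(a, b) \<in> adj (insert v W) E" for a b
  proof -
    have ab: "a \<in> insert v W" "b \<in> insert v W" "{a, b} \<in> E"
      using that unfolding adj_def by auto
    then have "a = v \<Longrightarrow> b = u" "b = v \<Longrightarrow> a = u"
      using nbr by (auto simp: insert_commute)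
    then show ?thesis
      using ab unfolding c_def adj_def by (cases "a = v \<or> b = v") auto
  qed
  from assms(2) show ?thesis
  proof (induct rule: trancl_induct)
    case (step y z)
    then show ?case using edge by (meson rtrancl_trans)
  qed (rule edge)
qed

lemma conn_pairs_insert_isolated:
  assumes "\<And>w. w \<in> W \<Longrightarrow> {v, w} \<in> E \<Longrightarrow> w = v"
  shows "conn_pairs (insert v W) E = conn_pairs W E"
proof
  show "conn_pairs (insert v W) E \<subseteq> conn_pairs W E"
  proof
    fix p assume "p \<in> conn_pairs (insert v W) E"
    then obtain x y where p: "p = {x, y}" "x \<noteq> y" "connected_in (insert v W) E x y"
      unfolding conn_pairs_def by blast
    have "(x, y) \<in> (adj W E)\<^sup>*"
      using adj_trancl_insert_collapse[of v W E v x y] assms p(3)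
      unfolding connected_in_def by auto
    then show "p \<in> conn_pairs W E"
      using p(1,2) by (simp add: conn_pairs_iff connected_in_def rtrancl_eq_or_trancl)
  qed
qed (simp add: conn_pairs_mono subset_insertI)

lemma Phi_cong_conn_pairs:
  "conn_pairs W E = conn_pairs W' E' \<Longrightarrow> Phi n A W E = Phi n A W' E'"
  unfolding Phi_def vul_def heal_def by simp

lemma vulnerable_pairs_insert_leaf:
  assumes "v \<notin> A" and nbr: "\<And>w. {v, w} \<in> E \<Longrightarrow> w = u"
    and "u \<in> W \<Longrightarrow> u \<notin> A" and "\<And>a. a \<in> A \<Longrightarrow> \<not> connected_in W E u a"
  shows "{p \<in> conn_pairs (insert v W) E. p \<inter> A \<noteq> {}} \<subseteq> conn_pairs W E"
proof
  let ?c = "\<lambda>z. if z = v then u else z"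
  have collapse: "(?c x, ?c y) \<in> (adj W E)\<^sup>*" if "connected_in (insert v W) E x y" for x y
    using adj_trancl_insert_collapse[of v W E u x y] nbr that unfolding connected_in_def by blast
  have v_cut_off: "x \<noteq> v" if "connected_in (insert v W) E x a" "a \<in> A" for x a
  proof
    assume "x = v"
    have "a \<noteq> v" "a \<in> insert v W"
      using assms(1) that trancl_adj_in[of x a "insert v W" E] unfolding connected_in_def by auto
    then have "u = a \<and> u \<in> W \<or> connected_in W E u a"
      using collapse[OF that(1)] \<open>x = v\<close> by (auto simp: connected_in_def rtrancl_eq_or_trancl)
    then show False using assms(3,4) that(2) by blast
  qed
  fix p assume "p \<in> {p \<in> conn_pairs (insert v W) E. p \<inter> A \<noteq> {}}"
  then obtain a where p: "p \<in> conn_pairs (insert v W) E" "a \<in> p" "a \<in> A" by blast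
  then obtain x where "p = {x, a}"
    by (elim conn_pairsE) (metis insert_commute insertE singletonD)
  then have xa: "x \<noteq> a" "connected_in (insert v W) E x a"
    using p(1) by (simp_all add: conn_pairs_iff)
  have "x \<noteq> v" "a \<noteq> v" using v_cut_off[OF xa(2) p(3)] p(3) assms(1) by auto
  then have "connected_in W E x a"
    using collapse[OF xa(2)] xa(1) by (simp add: connected_in_def rtrancl_eq_or_trancl)
  then show "p \<in> conn_pairs W E" using \<open>p = {x, a}\<close> xa(1) by (simp add: conn_pairs_iff)
qed

lemma Phi_insert_leaf_le:
  assumes "finite W" "v \<notin> A" and nbr: "\<And>w. {v, w} \<in> E \<Longrightarrow> w = u"
    and "u \<in> W \<Longrightarrow> u \<notin> A" and "\<And>a. a \<in> A \<Longrightarrow> \<not> connected_in W E u a"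
  shows "Phi n A (insert v W) E \<le> Phi n A W E"
proof -
  have mono: "conn_pairs W E \<subseteq> conn_pairs (insert v W) E"
    by (simp add: conn_pairs_mono subset_insertI)
  then have "{p \<in> conn_pairs (insert v W) E. p \<inter> A \<noteq> {}} = {p \<in> conn_pairs W E. p \<inter> A \<noteq> {}}"
    using vulnerable_pairs_insert_leaf[OF assms(2-5)] by blast
  then have "vul A (insert v W) E = vul A W E" unfolding vul_def by simp
  moreover have "heal A W E \<le> heal A (insert v W) E"
    unfolding heal_def using mono assms(1) by (intro card_mono) (auto simp: finite_conn_pairs)
  ultimately show ?thesis unfolding Phi_def by simp
qed

lemma attacked_component_cases:
  assumes "u \<in> W" and "u \<in> A \<or> (\<exists>a\<in>A. connected_in W E u a)"
  obtains (lost) p where "p \<in> conn_pairs W E" "u \<in> p" "p \<inter> A \<noteq> {}"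
    | (isolated) "\<And>w. w \<in> W \<Longrightarrow> {u, w} \<in> E \<Longrightarrow> w = u"
proof (cases "u \<in> A")
  case True
  show ?thesis
  proof (cases "\<exists>w \<in> W - {u}. {u, w} \<in> E")
    case True
    then obtain w where "w \<in> W" "w \<noteq> u" "{u, w} \<in> E" by blast
    then have "{u, w} \<in> conn_pairs W E"
      using \<open>u \<in> W\<close> by (auto simp: conn_pairs_iff connected_in_def adj_def)
    then show ?thesis using lost \<open>u \<in> A\<close> by blast
  qed (use isolated in blast)
next
  case False
  then obtain a where "a \<in> A" "connected_in W E u a" using assms(2) by blast
  then have "{u, a} \<in> conn_pairs W E" using False by (auto simp: conn_pairs_iff)
  then show ?thesis using lost \<open>a \<in> A\<close> by blast
qed

lemma Phi_swap_leaf_le: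
  assumes "finite V" "W \<subseteq> V" "v \<in> V" "u \<in> W" and nbr: "\<And>w. {v, w} \<in> E \<Longrightarrow> w = u"
    and attacked: "u \<in> A \<or> (\<exists>a\<in>A. connected_in W E u a)"
  shows "Phi (card V) A (insert v (W - {u})) E \<le> Phi (card V) A W E"
proof -
  let ?W' = "insert v (W - {u})"
  have W': "conn_pairs ?W' E = conn_pairs (W - {u}) E"
    by (rule conn_pairs_insert_isolated) (use nbr in blast)
  have pairs': "conn_pairs ?W' E \<subseteq> conn_pairs W E" "\<And>p. p \<in> conn_pairs ?W' E \<Longrightarrow> u \<notin> p"
    using conn_pairs_mono[of "W - {u}" W E] conn_pairs_subset[of _ "W - {u}" E] unfolding W' by auto
  from assms(4) attacked show ?thesis
  proof (cases rule: attacked_component_cases)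
    case (lost p)
    have "p \<notin> conn_pairs ?W' E" using pairs'(2) lost(2) by blast
    then have "{q \<in> conn_pairs ?W' E. q \<inter> A \<noteq> {}} \<subset> {q \<in> conn_pairs W E. q \<inter> A \<noteq> {}}"
      using pairs'(1) lost by blast
    then have "vul A ?W' E < vul A W E"
      unfolding vul_def using finite_subset[OF assms(2,1)]
      by (intro psubset_card_mono) (simp_all add: finite_conn_pairs)
    then show ?thesis using Phi_less_of_vul_less[OF assms(1,2)] by (simp add: less_imp_le)
  next
    case isolated
    have "conn_pairs (insert u (W - {u})) E = conn_pairs (W - {u}) E"
      by (rule conn_pairs_insert_isolated) (use isolated in blast)
    then have "conn_pairs W E = conn_pairs (W - {u}) E"
      unfolding insert_Diff[OF assms(4)] .
    then have "Phi (card V) A ?W' E = Phi (card V) A W E"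
      by (intro Phi_cong_conn_pairs) (simp add: W')
    then show ?thesis by simp
  qed
qed

lemma degree_one_neighbour:
  assumes "simple_graph V E" "degree E v = 1"
  obtains u where "u \<in> V" "u \<noteq> v" "{v, u} \<in> E" "\<And>w. {v, w} \<in> E \<Longrightarrow> w = u"
proof -
  obtain e where e: "{e' \<in> E. v \<in> e'} = {e}"
    using assms(2) unfolding degree_def by (rule card_1_singletonE)
  then have "e \<in> E" "v \<in> e" by blast+
  then have "card e = 2" "e \<subseteq> V" using assms(1) unfolding simple_graph_def by blast+
  then obtain x y where xy: "e = {x, y}" "x \<noteq> y" unfolding card_2_iff by blast
  define u where "u = (if v = x then y else x)"
  have u: "e = {v, u}" "u \<noteq> v" using xy \<open>v \<in> e\<close> unfolding u_def by auto
  have uniq: "w = u" if "{v, w} \<in> E" for w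
  proof -
    have "{v, w} \<in> {e' \<in> E. v \<in> e'}" using that by simp
    then have "{v, w} = {v, u}" using e u(1) by simp
    then show ?thesis by (auto simp: doubleton_eq_iff)
  qed
  show ?thesis
    by (rule that[OF _ u(2) _ uniq]) (use u(1) \<open>e \<in> E\<close> \<open>e \<subseteq> V\<close> in auto)
qed

lemma two_le_degree:
  assumes "simple_graph V E" "{u, v} \<in> E" "{u, w} \<in> E" "v \<noteq> w"
  shows "2 \<le> degree E u"
proof -
  have "finite E"
    using assms(1) unfolding simple_graph_def by (meson Pow_iff finite_Pow_iff finite_subset subsetI)
  moreover have "{{u, v}, {u, w}} \<subseteq> {e \<in> E. u \<in> e}" using assms(2,3) by auto
  ultimately have "card {{u, v}, {u, w}} \<le> degree E u"
    unfolding degree_def by (intro card_mono) auto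
  then show ?thesis using assms(4) by (simp add: doubleton_eq_iff)
qed

lemma two_le_degree_if_connected:
  assumes "simple_graph V E" "{v, u} \<in> E" "v \<notin> W" "connected_in W E u a"
  shows "2 \<le> degree E u"
proof -
  obtain w where "(u, w) \<in> adj W E"
    using assms(4) unfolding connected_in_def by (blast dest: tranclD)
  then have "{u, w} \<in> E" "v \<noteq> w" using assms(3) unfolding adj_def by auto
  moreover have "{u, v} \<in> E" using assms(2) by (simp add: insert_commute)
  ultimately show ?thesis using two_le_degree[OF assms(1)] by blast
qed

lemma snpv_solution_exists:
  assumes "finite V"
  shows "\<exists>C. snpv_solution V E A k C"
proof -
  let ?S = "{C. C \<subseteq> V \<and> card C \<le> k}"
  have "finite ?S" using assms by (simp add: finite_subset[of _ "Pow V"] subset_iff)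
  moreover have "{} \<in> ?S" by simp
  ultimately obtain C where "is_arg_min (\<lambda>C. Phi (card V) A (V - C) E) (\<lambda>C. C \<in> ?S) C"
    using ex_is_arg_min_if_finite by blast
  then show ?thesis unfolding is_arg_min_linorder snpv_solution_iff by auto
qed

lemma snpv_solution_of_Phi_le:
  assumes "snpv_solution V E A k C" "C' \<subseteq> V" "card C' \<le> card C"
    and "Phi (card V) A (V - C') E \<le> Phi (card V) A (V - C) E"
  shows "snpv_solution V E A k C'"
  using assms unfolding snpv_solution_iff by (meson order_trans)

lemma snpv_solution_spare_leaf:
  assumes G: "simple_graph V E" and sol: "snpv_solution V E A k C"
    and "v \<in> C" "v \<notin> A" "degree E v = 1"
  defines "D \<equiv> {w \<in> V - A. degree E w = 1}"
  shows "\<exists>C'. snpv_solution V E A k C' \<and> C' \<inter> D \<subseteq> C - {v}"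
proof -
  obtain u where u: "u \<in> V" "u \<noteq> v" "{v, u} \<in> E" and nbr: "\<And>w. {v, w} \<in> E \<Longrightarrow> w = u"
    using degree_one_neighbour[OF G assms(5)] by blast
  have "finite V" "C \<subseteq> V" using G sol unfolding simple_graph_def snpv_solution_def by auto
  then have "finite C" "v \<in> V" using finite_subset \<open>v \<in> C\<close> by blast+
  let ?W = "V - C"
  show ?thesis
  proof (cases "u \<in> ?W \<and> (u \<in> A \<or> (\<exists>a\<in>A. connected_in ?W E u a))")
    case True
    let ?C' = "insert u (C - {v})"
    have "V - ?C' = insert v (?W - {u})" using \<open>v \<in> C\<close> \<open>C \<subseteq> V\<close> u(2) by auto
    moreover have "Phi (card V) A (insert v (?W - {u})) E \<le> Phi (card V) A ?W E"
      by (rule Phi_swap_leaf_le[OF \<open>finite V\<close> Diff_subset \<open>v \<in> V\<close> _ nbr]) (use True in blast)+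
    moreover have "card ?C' \<le> card C"
      using \<open>finite C\<close> \<open>v \<in> C\<close> by (intro card_insert_le_m1) (auto simp: card_gt_0_iff)
    ultimately have "snpv_solution V E A k ?C'"
      using \<open>C \<subseteq> V\<close> u(1) by (intro snpv_solution_of_Phi_le[OF sol]) auto
    moreover have "u \<notin> D"
      using True two_le_degree_if_connected[OF G u(3), of ?W] \<open>v \<in> C\<close> unfolding D_def by force
    then have "?C' \<inter> D \<subseteq> C - {v}" by blast
    ultimately show ?thesis by blast
  next
    case False
    let ?C' = "C - {v}"
    have "V - ?C' = insert v ?W" using \<open>v \<in> C\<close> \<open>C \<subseteq> V\<close> by auto
    moreover have "Phi (card V) A (insert v ?W) E \<le> Phi (card V) A ?W E"
    proof (rule Phi_insert_leaf_le[OF _ \<open>v \<notin> A\<close> nbr])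
      show "\<not> connected_in ?W E u a" if "a \<in> A" for a
        using False that trancl_adj_in[of u a ?W E] unfolding connected_in_def by blast
    qed (use False \<open>finite V\<close> in auto)
    ultimately have "snpv_solution V E A k ?C'"
      using \<open>C \<subseteq> V\<close> card_Diff1_le[of C v] by (intro snpv_solution_of_Phi_le[OF sol]) auto
    then show ?thesis by blast
  qed
qed

theorem proposition1:
  fixes V :: "'a set" and E :: "'a set set" and A :: "'a set" and k :: nat
  assumes "simple_graph V E" and "A \<subseteq> V"
  defines "D \<equiv> {v \<in> V - A. degree E v = 1}"
  shows "\<exists>C. snpv_solution V E A k C \<and> C \<inter> D = {}"
proof -
  have "finite V" using assms(1) unfolding simple_graph_def by blast
  then obtain C0 where "snpv_solution V E A k C0" using snpv_solution_exists by blast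
  then obtain C where sol: "snpv_solution V E A k C"
    and least: "\<And>C'. snpv_solution V E A k C' \<Longrightarrow> card (C \<inter> D) \<le> card (C' \<inter> D)"
    using ex_has_least_nat[of "snpv_solution V E A k" C0 "\<lambda>C. card (C \<inter> D)"] by blast
  have "C \<inter> D = {}"
  proof (rule ccontr)
    assume "C \<inter> D \<noteq> {}"
    then obtain v where v: "v \<in> C" "v \<in> D" by blast
    then obtain C' where C': "snpv_solution V E A k C'" "C' \<inter> D \<subseteq> C - {v}"
      using snpv_solution_spare_leaf[OF assms(1) sol] unfolding D_def by blast
    have "C' \<inter> D \<subset> C \<inter> D" using C'(2) v by blast
    then have "card (C' \<inter> D) < card (C \<inter> D)"
      using \<open>finite V\<close> unfolding D_def by (intro psubset_card_mono) auto
    then show False using least[OF C'(1)] by simp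
  qed
  then show ?thesis using sol by blast
qed

end
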